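(* Let $N=2$, $T>0$ and $\mathbf a(t,x_1,x_2)=(-\operatorname{sgn}x_1,0)$ (which satisfies OSLC with $\alpha\equiv0$). Then: (a) $V^T_e=\{(t,x_1,x_2)\in(0,T)\times\mathbb R^2: |x_1|<T-t\}$; (b) for every $\lambda\in\mathbb R$, the map $X^T_\lambda(t,x_1,x_2)=\bigl((|x_1|-(T-t))_+\operatorname{sgn}x_1,\ x_2+\lambda(T-t-|x_1|)_+\bigr)$ is a transport flow for $\mathbf a$, so transport flows are not unique; (c) every transport flow $X^T$ for $\mathbf a$ satisfies $J(X^T)=\mathbf 1_{|x_1|\ge T-t}$ a.e.; (d) for each $\lambda$ the family $X_\lambda(s,t,x)=\bigl((|x_1|-(s-t))_+\operatorname{sgn}x_1,\ x_2+\lambda(s-t-|x_1|)_+\bigr)$, $0\le t\le s\le T$, satisfies the semigroup property $X_\lambda(s,t,X_\lambda(t,\tau,x))=X_\lambda(s,\tau,x)$ for $0\le\tau\le t\le s\le T$.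
   Context: $\mathcal E^T$ is the set of real-valued $p\in\mathrm{Lip}_{loc}([0,T]\times\mathbb R^N)$ with $\partial_tp+\mathbf a\cdot\nabla p=0$ a.e. in $(0,T)\times\mathbb R^N$ and $p(T,\cdot)=0$; $V^T_e=\bigcup_{p\in\mathcal E^T}\{(t,x): p(t,x)\neq0\}$. A transport flow is a map $X^T\in\mathrm{Lip}([0,T]\times\mathbb R^N;\mathbb R^N)$ (globally Lipschitz) such that $\partial_tX^T+\mathbf a\cdot\nabla X^T=0$ a.e. (componentwise, spatial gradient), $X^T(T,x)=x$, and $J(X^T)=\det(\nabla X^T_1,\dots,\nabla X^T_N)\ge0$ a.e. $(z)_+=\max(z,0)$. *)

theory Defs
  imports "HOL-Analysis.Analysis"
begin

text \<open>Points of (t,x) space with N = 2 are pairs (t, (x1, x2)) :: real \<times> (real \<times> real).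
  A velocity field a is a function of t and x with values in real \<times> real.\<close>

definition locLip :: "('a::metric_space) set \<Rightarrow> ('a \<Rightarrow> 'b::metric_space) \<Rightarrow> bool" where
  "locLip S f \<longleftrightarrow> (\<forall>K. compact K \<and> K \<subseteq> S \<longrightarrow> (\<exists>C. C-lipschitz_on K f))"

text \<open>u solves d_t u + a . grad_x u = 0 almost everywhere in (0,T) x R^2
  (componentwise if u is vector valued), using the a.e. existing derivative.\<close>
definition solves_transport ::
  "real \<Rightarrow> (real \<Rightarrow> real \<times> real \<Rightarrow> real \<times> real) \<Rightarrow> (real \<times> (real \<times> real) \<Rightarrow> 'b::real_normed_vector) \<Rightarrow> bool" where
  "solves_transport T a u \<longleftrightarrow>
     (AE z in lborel. z \<in> {0<..<T} \<times> UNIV \<longrightarrow>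
        (\<exists>D. (u has_derivative D) (at z) \<and>
             D (1, (0, 0)) + fst (a (fst z) (snd z)) *\<^sub>R D (0, (1, 0))
                           + snd (a (fst z) (snd z)) *\<^sub>R D (0, (0, 1)) = 0))"

definition adjoint_class ::
  "real \<Rightarrow> (real \<Rightarrow> real \<times> real \<Rightarrow> real \<times> real) \<Rightarrow> (real \<times> (real \<times> real) \<Rightarrow> real) set" where
  "adjoint_class T a = {p. locLip ({0..T} \<times> UNIV) p \<and> solves_transport T a p \<and> (\<forall>x. p (T, x) = 0)}"

definition Ve :: "real \<Rightarrow> (real \<Rightarrow> real \<times> real \<Rightarrow> real \<times> real) \<Rightarrow> (real \<times> (real \<times> real)) set" where
  "Ve T a = (\<Union>p\<in>adjoint_class T a. {z. z \<in> {0<..<T} \<times> UNIV \<and> p z \<noteq> 0})"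

text \<open>Spatial Jacobian det(grad X1, grad X2) computed from the full derivative D of X.\<close>
definition spatial_jac :: "(real \<times> (real \<times> real) \<Rightarrow> real \<times> real) \<Rightarrow> real" where
  "spatial_jac D = fst (D (0, (1, 0))) * snd (D (0, (0, 1))) - fst (D (0, (0, 1))) * snd (D (0, (1, 0)))"

definition transport_flow ::
  "real \<Rightarrow> (real \<Rightarrow> real \<times> real \<Rightarrow> real \<times> real) \<Rightarrow> (real \<times> (real \<times> real) \<Rightarrow> real \<times> real) \<Rightarrow> bool" where
  "transport_flow T a X \<longleftrightarrow>
     (\<exists>C. C-lipschitz_on ({0..T} \<times> UNIV) X) \<and>
     solves_transport T a X \<and>
     (\<forall>x. X (T, x) = x) \<and>
     (AE z in lborel. z \<in> {0<..<T} \<times> UNIV \<longrightarrow>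
        (\<exists>D. (X has_derivative D) (at z) \<and> spatial_jac D \<ge> 0))"

definition pos_part :: "real \<Rightarrow> real" where
  "pos_part z = max z 0"

definition a_ex :: "real \<Rightarrow> real \<times> real \<Rightarrow> real \<times> real" where
  "a_ex t x = (- sgn (fst x), 0)"

definition X_lam :: "real \<Rightarrow> real \<Rightarrow> real \<Rightarrow> real \<times> real \<Rightarrow> real \<times> real" where
  "X_lam lam s t x = (pos_part (\<bar>fst x\<bar> - (s - t)) * sgn (fst x),
                      snd x + lam * pos_part (s - t - \<bar>fst x\<bar>))"

definition XT_lam :: "real \<Rightarrow> real \<Rightarrow> real \<times> (real \<times> real) \<Rightarrow> real \<times> real" where
  "XT_lam T lam z = (pos_part (\<bar>fst (snd z)\<bar> - (T - fst z)) * sgn (fst (snd z)),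
                    snd (snd z) + lam * pos_part (T - fst z - \<bar>fst (snd z)\<bar>))"

end

theory Submission
  imports Defs
begin

(* The characteristics of the field are the lines t \<mapsto> (t, \<sigma> (y - t), x2), \<sigma> = \<plusminus>1, which
  run into the line x1 = 0 at time t = y.  A locally Lipschitz a.e. solution of
  \<partial>\<^sub>t u - sgn x1 \<partial>\<^sub>x\<^sub>1 u = 0 is constant along them for 0 \<le> t \<le> y: in characteristic
  coordinates Fubini puts almost every line off the exceptional null set, a Lipschitz
  function of one variable whose derivative vanishes a.e. is constant (by Sard, the
  image of a null set and of the critical set are null), and continuity reaches the
  remaining lines.
  Consequently an element of E^T vanishes where the characteristic reaches t = T,
  i.e. for |x1| \<ge> T - t, while the tent (T - t - |x1|)\<^sub>+ lies in E^T.  A transport flow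
  equals (x1 - sgn x1 (T - t), x2) there, so J = 1.  Inside the cone the points
  (t, x1, x2) and (t, -x1, x2) lie on characteristics through (t + |x1|, 0, x2), so X is
  even in x1; its Jacobians at mirror points have opposite signs, yet both are \<ge> 0
  a.e., hence J = 0 a.e. in the cone. *)

section \<open>Null sets\<close>

lemma AE_lborel_negligibleE:
  fixes P :: "'a::euclidean_space \<Rightarrow> bool"
  assumes "AE x in lborel. P x"
  obtains N where "negligible N" "\<And>x. x \<notin> N \<Longrightarrow> P x"
proof -
  from assms obtain N where N: "{x \<in> space lborel. \<not> P x} \<subseteq> N" "emeasure lborel N = 0" "N \<in> sets lborel"
    by (rule AE_E)
  then have "N \<in> null_sets lborel" by (auto intro: null_setsI)
  then have "negligible N"
    by (simp add: negligible_iff_null_sets null_sets_completionI)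
  with N(1) that show ?thesis by auto
qed

lemma AE_lborel_if_negligible:
  fixes N :: "'a::euclidean_space set"
  assumes "negligible N" "\<And>x. x \<notin> N \<Longrightarrow> P x"
  shows "AE x in lborel. P x"
proof -
  have "AE x in lebesgue. x \<notin> N"
    using assms(1) by (simp add: negligible_iff_null_sets AE_not_in)
  then have "AE x in lborel. x \<notin> N" by (simp add: AE_completion_iff)
  then show ?thesis by (rule AE_mp) (auto intro: assms(2))
qed

lemma AE_lborel_pair_if_negligible:
  fixes N :: "('a::euclidean_space \<times> 'b::euclidean_space) set"
  assumes "negligible N"
  shows "AE w in lborel. AE t in lborel. (w, t) \<notin> N"
proof -
  have "AE q in lborel \<Otimes>\<^sub>M lborel. q \<notin> N"
    unfolding lborel_prod by (rule AE_lborel_if_negligible[OF assms])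
  then show ?thesis by (rule lborel_pair.AE_pair)
qed

lemma negligible_linear_image:
  fixes f :: "'a::euclidean_space \<Rightarrow> 'b::euclidean_space"
  assumes "linear f" "DIM('a) \<le> DIM('b)" "negligible N"
  shows "negligible (f ` N)"
  using assms by (intro negligible_differentiable_image_negligible linear_imp_differentiable_on)

lemma AE_lborel_lines_off_negligible:
  fixes N :: "(real \<times> 'a::euclidean_space) set" and c :: 'a
  assumes "negligible N"
  shows "AE w in lborel. AE t in lborel. (t, w + t *\<^sub>R c) \<notin> N"
proof -
  define \<Psi> :: "real \<times> 'a \<Rightarrow> 'a \<times> real" where "\<Psi> z = (snd z - fst z *\<^sub>R c, fst z)" for z
  have "linear \<Psi>" by (rule linearI) (auto simp: \<Psi>_def algebra_simps)
  then have "negligible (\<Psi> ` N)" using assms by (intro negligible_linear_image) auto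
  then have "AE w in lborel. AE t in lborel. (w, t) \<notin> \<Psi> ` N" by (rule AE_lborel_pair_if_negligible)
  moreover have "\<Psi> (t, w + t *\<^sub>R c) = (w, t)" for w t by (simp add: \<Psi>_def)
  ultimately show ?thesis by (auto elim!: eventually_mono) (metis image_eqI)
qed

lemma continuous_on_eq_off_negligible:
  fixes f g :: "'a::euclidean_space \<Rightarrow> 'b::real_normed_vector"
  assumes "open W" "continuous_on W f" "continuous_on W g" "negligible N"
    and "\<And>w. w \<in> W \<Longrightarrow> w \<notin> N \<Longrightarrow> f w = g w" and "w \<in> W"
  shows "f w = g w"
proof (rule ccontr)
  let ?E = "W \<inter> (\<lambda>w. f w - g w) -` (- {0})"
  assume "f w \<noteq> g w"
  then have "?E \<noteq> {}" using \<open>w \<in> W\<close> by auto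
  moreover have "open ?E"
    using continuous_open_preimage[OF continuous_on_diff[OF assms(2,3)] assms(1)] by auto
  moreover have "?E \<subseteq> N" using assms(5) by auto
  ultimately show False using \<open>negligible N\<close> open_not_negligible negligible_subset by blast
qed

section \<open>Lipschitz functions\<close>

lemma negligible_image_deriv_zero:
  fixes g :: "real \<Rightarrow> real"
  assumes "\<And>t. t \<in> S \<Longrightarrow> (g has_real_derivative 0) (at t)"
  shows "negligible (g ` S)"
proof -
  \<comment> \<open>Sard's lemma is available for \<open>real^'n\<close> only, hence the detour through \<open>real^1\<close>.\<close>
  define f :: "real^1 \<Rightarrow> real^1" where "f = (\<lambda>v. vec (g (v$1)))"
  have der: "(f has_derivative (\<lambda>h. 0)) (at v within vec ` S)" if v: "v \<in> vec ` S" for v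
  proof -
    obtain t where t: "t \<in> S" "v = vec t" using v by blast
    have "(g has_derivative (\<lambda>h. h * 0)) (at t)"
      by (rule has_derivative_eq_rhs[OF assms[OF t(1), unfolded has_field_derivative_def]]) auto
    then have "(f has_derivative (*\<^sub>R) 0) (at v within vec ` S)"
      using has_derivative_vector_1[of g "\<lambda>_. 0" t S] t by (simp add: f_def has_derivative_at_withinI)
    moreover have "(*\<^sub>R) (0::real) = (\<lambda>h::real^1. 0)" by auto
    ultimately show ?thesis by simp
  qed
  have "negligible (f ` vec ` S)"
    by (rule baby_Sard[OF _ der]) (simp_all add: matrix_def flip: zero_vec_def)
  then have "negligible ((\<lambda>v. v$1) ` f ` vec ` S)"
    by (rule negligible_linear_image[rotated 2]) (simp_all add: bounded_linear.linear bounded_linear_vec_nth)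
  moreover have "(\<lambda>v. v$1) ` f ` vec ` S = g ` S" by (auto simp: f_def image_image)
  ultimately show ?thesis by simp
qed

lemma lipschitz_on_deriv_zero_ae_const_real:
  fixes g :: "real \<Rightarrow> real"
  assumes "a < b" and lip: "C-lipschitz_on {a..b} g" and "negligible N"
    and der: "\<And>t. t \<in> {a<..<b} \<Longrightarrow> t \<notin> N \<Longrightarrow> (g has_real_derivative 0) (at t)"
  shows "g a = g b"
proof (rule ccontr)
  assume "g a \<noteq> g b"
  have "negligible (g ` ({a<..<b} - N))" by (rule negligible_image_deriv_zero) (use der in auto)
  moreover have "negligible (g ` ({a<..<b} \<inter> N))"
  proof (rule negligible_locally_Lipschitz_image)
    show "negligible ({a<..<b} \<inter> N)" using \<open>negligible N\<close> by (rule negligible_subset) auto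
    fix x assume x: "x \<in> {a<..<b} \<inter> N"
    have "norm (g y - g x) \<le> C * norm (y - x)" if "y \<in> {a<..<b}" for y
      using lipschitz_onD[OF lip, of y x] x that by (simp add: dist_norm)
    then show "\<exists>T B. open T \<and> x \<in> T \<and> (\<forall>y\<in>({a<..<b} \<inter> N) \<inter> T. norm (g y - g x) \<le> B * norm (y - x))"
      using x by (intro exI[of _ "{a<..<b}"] exI[of _ C]) auto
  qed simp
  ultimately have "negligible (g ` ({a, b} \<union> ({a<..<b} - N) \<union> ({a<..<b} \<inter> N)))"
    by (simp add: image_Un negligible_insert)
  moreover have "g ` {a..b} \<subseteq> g ` ({a, b} \<union> ({a<..<b} - N) \<union> ({a<..<b} \<inter> N))"
    by (intro image_mono) auto
  ultimately have "negligible (g ` {a..b})" by (rule negligible_subset)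
  moreover have "{min (g a) (g b) <..< max (g a) (g b)} \<subseteq> g ` {a..b}"
  proof -
    have conn: "connected (g ` {a..b})"
      using lip by (intro connected_continuous_image lipschitz_on_continuous_on) auto
    have ga: "g a \<in> g ` {a..b}" and gb: "g b \<in> g ` {a..b}" using \<open>a < b\<close> by auto
    show ?thesis
      using connectedD_interval[OF conn ga gb] connectedD_interval[OF conn gb ga]
      by (auto simp: min_def max_def split: if_splits)
  qed
  moreover have "\<not> negligible {min (g a) (g b) <..< max (g a) (g b)}"
    by (rule open_not_negligible) (use \<open>g a \<noteq> g b\<close> in \<open>auto simp: min_def max_def\<close>)
  ultimately show False using negligible_subset by blast
qed

lemma lipschitz_on_deriv_zero_ae_const:
  fixes g :: "real \<Rightarrow> 'b::euclidean_space"
  assumes "a < b" and lip: "C-lipschitz_on {a..b} g" and "negligible N"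
    and der: "\<And>t. t \<in> {a<..<b} \<Longrightarrow> t \<notin> N \<Longrightarrow> (g has_derivative (\<lambda>h. 0)) (at t)"
  shows "g a = g b"
proof (rule euclidean_eqI)
  fix i :: 'b assume "i \<in> Basis"
  have "C-lipschitz_on {a..b} (\<lambda>t. g t \<bullet> i)"
  proof (rule lipschitz_onI)
    fix s t assume "s \<in> {a..b}" "t \<in> {a..b}"
    have "\<bar>(g s - g t) \<bullet> i\<bar> \<le> norm (g s - g t)" using \<open>i \<in> Basis\<close> by (rule Basis_le_norm)
    also have "\<dots> \<le> C * dist s t" using lipschitz_onD[OF lip \<open>s \<in> _\<close> \<open>t \<in> _\<close>] by (simp add: dist_norm)
    finally show "dist (g s \<bullet> i) (g t \<bullet> i) \<le> C * dist s t" by (simp add: dist_real_def inner_diff_left)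
  qed (use lipschitz_on_nonneg[OF lip] in simp)
  moreover have "((\<lambda>t. g t \<bullet> i) has_real_derivative 0) (at t)" if "t \<in> {a<..<b}" "t \<notin> N" for t
    using has_derivative_inner_left[OF der[OF that], of i]
    by (rule has_derivative_imp_has_field_derivative) simp
  ultimately show "g a \<bullet> i = g b \<bullet> i"
    by (rule lipschitz_on_deriv_zero_ae_const_real[OF \<open>a < b\<close> _ \<open>negligible N\<close>])
qed

lemma lipschitz_on_imp_locLip: "C-lipschitz_on S u \<Longrightarrow> locLip S u"
  unfolding locLip_def by (blast intro: lipschitz_on_subset)

lemma locLip_subset: "locLip S u \<Longrightarrow> T \<subseteq> S \<Longrightarrow> locLip T u"
  unfolding locLip_def by blast

lemma lipschitz_on_pos_part_compose:
  assumes "C-lipschitz_on S f"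
  shows "C-lipschitz_on S (\<lambda>x. pos_part (f x))"
proof (rule lipschitz_onI)
  fix x y assume "x \<in> S" "y \<in> S"
  have "dist (pos_part (f x)) (pos_part (f y)) \<le> dist (f x) (f y)"
    by (auto simp: pos_part_def dist_real_def)
  also have "\<dots> \<le> C * dist x y" using assms \<open>x \<in> S\<close> \<open>y \<in> S\<close> by (rule lipschitz_onD)
  finally show "dist (pos_part (f x)) (pos_part (f y)) \<le> C * dist x y" .
qed (rule lipschitz_on_nonneg[OF assms])

lemma lipschitz_on_abs_compose:
  fixes f :: "'a::metric_space \<Rightarrow> real"
  assumes "C-lipschitz_on S f"
  shows "C-lipschitz_on S (\<lambda>x. \<bar>f x\<bar>)"
proof (rule lipschitz_onI)
  fix x y assume "x \<in> S" "y \<in> S"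
  have "dist \<bar>f x\<bar> \<bar>f y\<bar> \<le> dist (f x) (f y)" by (simp add: dist_real_def abs_triangle_ineq3)
  also have "\<dots> \<le> C * dist x y" using assms \<open>x \<in> S\<close> \<open>y \<in> S\<close> by (rule lipschitz_onD)
  finally show "dist \<bar>f x\<bar> \<bar>f y\<bar> \<le> C * dist x y" .
qed (rule lipschitz_on_nonneg[OF assms])

lemma lipschitz_on_coordinates:
  shows "1-lipschitz_on S (\<lambda>z::real \<times> (real \<times> real). fst z)"
    and "1-lipschitz_on S (\<lambda>z::real \<times> (real \<times> real). fst (snd z))"
    and "1-lipschitz_on S (\<lambda>z::real \<times> (real \<times> real). snd (snd z))"
  using dist_fst_le order_trans[OF dist_fst_le dist_snd_le] order_trans[OF dist_snd_le dist_snd_le]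
  by (auto intro!: lipschitz_onI)

lemma locLip_imp_continuous_on:
  fixes u :: "'a::metric_space \<Rightarrow> 'b::metric_space"
  assumes "locally compact S" "locLip S u"
  shows "continuous_on S u"
proof (clarsimp simp: continuous_on_eq_continuous_within)
  fix x assume "x \<in> S"
  then obtain V K where "x \<in> V" "V \<subseteq> K" "K \<subseteq> S" "openin (top_of_set S) V" "compact K"
    using assms(1) by (meson locally_compact)
  then obtain G where "open G" "V = S \<inter> G" by (meson openin_open)
  obtain C where "C-lipschitz_on K u" using assms(2) \<open>compact K\<close> \<open>K \<subseteq> S\<close> by (auto simp: locLip_def)
  then have "continuous (at x within K) u"
    using \<open>x \<in> V\<close> \<open>V \<subseteq> K\<close> by (auto intro: lipschitz_on_continuous_within)
  then have "continuous (at x within S \<inter> G) u"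
    using \<open>V \<subseteq> K\<close> \<open>V = S \<inter> G\<close> continuous_within_subset by blast
  moreover have "at x within S \<inter> G = at x within S"
    using \<open>open G\<close> \<open>x \<in> V\<close> \<open>V = S \<inter> G\<close> by (intro at_within_nhd[where S = G]) auto
  ultimately show "continuous (at x within S) u" by simp
qed

section \<open>Constancy along characteristics\<close>

lemma locLip_const_on_line:
  fixes u :: "'a::euclidean_space \<Rightarrow> 'b::euclidean_space"
  assumes lip: "locLip U u" and "a < b" and line: "\<And>t. t \<in> {a..b} \<Longrightarrow> p + t *\<^sub>R v \<in> U"
    and "negligible N"
    and der: "\<And>t. t \<in> {a<..<b} \<Longrightarrow> t \<notin> N \<Longrightarrow>
                \<exists>D. (u has_derivative D) (at (p + t *\<^sub>R v)) \<and> D v = 0"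
  shows "u (p + a *\<^sub>R v) = u (p + b *\<^sub>R v)"
proof -
  let ?\<gamma> = "\<lambda>t. p + t *\<^sub>R v"
  have "compact (?\<gamma> ` {a..b})"
    by (intro compact_continuous_image continuous_intros) simp
  moreover have "?\<gamma> ` {a..b} \<subseteq> U" using line by blast
  ultimately obtain C where C: "C-lipschitz_on (?\<gamma> ` {a..b}) u"
    using lip unfolding locLip_def by blast
  have "(norm v)-lipschitz_on {a..b} ?\<gamma>"
    by (rule lipschitz_onI) (simp_all add: dist_real_def mult.commute)
  then have "(C * norm v)-lipschitz_on {a..b} (\<lambda>t. u (?\<gamma> t))"
    using C by (rule lipschitz_on_compose2)
  moreover have "((\<lambda>t. u (?\<gamma> t)) has_derivative (\<lambda>h. 0)) (at t)" if t: "t \<in> {a<..<b}" "t \<notin> N" for t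
  proof -
    obtain D where D: "(u has_derivative D) (at (?\<gamma> t))" "D v = 0" using der[OF t] by blast
    have "(?\<gamma> has_derivative (\<lambda>h. h *\<^sub>R v)) (at t)"
      by (auto intro!: derivative_eq_intros)
    from has_derivative_compose[OF this D(1)]
    show ?thesis using linear_scale[OF has_derivative_linear[OF D(1)]] D(2) by simp
  qed
  ultimately show ?thesis
    by (rule lipschitz_on_deriv_zero_ae_const[OF \<open>a < b\<close> _ \<open>negligible N\<close>])
qed

lemma locLip_const_along_characteristics:
  fixes u :: "real \<times> 'a::euclidean_space \<Rightarrow> 'b::euclidean_space" and c :: 'a
  assumes U: "open U" "locLip U u"
    and pde: "AE z in lborel. z \<in> U \<longrightarrow> (\<exists>D. (u has_derivative D) (at z) \<and> D (1, c) = 0)"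
    and W: "open W" "\<And>w t. w \<in> W \<Longrightarrow> t \<in> {a..b} \<Longrightarrow> (t, w + t *\<^sub>R c) \<in> U"
    and "w \<in> W" "a \<le> b"
  shows "u (a, w + a *\<^sub>R c) = u (b, w + b *\<^sub>R c)"
proof (cases "a = b")
  case False
  then have "a < b" using \<open>a \<le> b\<close> by simp
  obtain N where "negligible N"
    and N: "\<And>z. z \<notin> N \<Longrightarrow> z \<in> U \<longrightarrow> (\<exists>D. (u has_derivative D) (at z) \<and> D (1, c) = 0)"
    using pde by (rule AE_lborel_negligibleE) blast
  obtain NW where "negligible NW"
    and NW: "\<And>w. w \<notin> NW \<Longrightarrow> AE t in lborel. (t, w + t *\<^sub>R c) \<notin> N"
    using AE_lborel_lines_off_negligible[OF \<open>negligible N\<close>] by (rule AE_lborel_negligibleE) blast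
  have line: "(0, w) + t *\<^sub>R (1, c) = (t, w + t *\<^sub>R c)" for w t by simp
  have on_line: "u (a, w + a *\<^sub>R c) = u (b, w + b *\<^sub>R c)" if w: "w \<in> W" "w \<notin> NW" for w
  proof -
    obtain M where "negligible M" and M: "\<And>t. t \<notin> M \<Longrightarrow> (t, w + t *\<^sub>R c) \<notin> N"
      using NW[OF w(2)] by (rule AE_lborel_negligibleE) blast
    have "u ((0, w) + a *\<^sub>R (1, c)) = u ((0, w) + b *\<^sub>R (1, c))"
    proof (rule locLip_const_on_line[OF U(2) \<open>a < b\<close> _ \<open>negligible M\<close>])
      show "(0, w) + t *\<^sub>R (1, c) \<in> U" if "t \<in> {a..b}" for t
        unfolding line using W(2)[OF w(1) that] .
      show "\<exists>D. (u has_derivative D) (at ((0, w) + t *\<^sub>R (1, c))) \<and> D (1, c) = 0"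
        if "t \<in> {a<..<b}" "t \<notin> M" for t
        unfolding line using N[OF M[OF that(2)]] W(2)[OF w(1), of t] that(1) by auto
    qed
    then show ?thesis unfolding line .
  qed
  have cont: "continuous_on W (\<lambda>w. u (t, w + t *\<^sub>R c))" if "t \<in> {a..b}" for t
    by (rule continuous_on_compose2[OF locLip_imp_continuous_on[OF open_imp_locally_compact[OF U(1)] U(2)]])
      (use W(2) that in \<open>auto intro!: continuous_intros\<close>)
  show ?thesis
    by (rule continuous_on_eq_off_negligible[OF W(1) cont cont \<open>negligible NW\<close> on_line \<open>w \<in> W\<close>])
      (use \<open>a \<le> b\<close> in auto)
qed simp

section \<open>The field a(t, x) = (- sgn x1, 0)\<close>

lemma abs_eq_1_mult_self:
  fixes \<sigma> :: real
  assumes "\<bar>\<sigma>\<bar> = 1"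
  shows "\<sigma> * \<sigma> = 1" "\<sigma> * (\<sigma> * c) = c"
  using assms by (metis abs_mult_self_eq mult_1, metis abs_mult_self_eq mult_1 mult.assoc mult_1_left)

lemma sgn_abs_eq_if_unit_mult_pos:
  fixes \<sigma> x :: real
  assumes "\<bar>\<sigma>\<bar> = 1" "0 < \<sigma> * x"
  shows "sgn x = \<sigma>" "\<bar>x\<bar> = \<sigma> * x"
  using assms by (auto simp: sgn_if abs_if zero_less_mult_iff split: if_splits)

lemma solves_transport_a_ex_directional:
  assumes "solves_transport T a_ex u" "\<bar>\<sigma>\<bar> = 1"
  shows "AE z in lborel. z \<in> {0<..<T} \<times> {x. 0 < \<sigma> * fst x} \<longrightarrow>
           (\<exists>D. (u has_derivative D) (at z) \<and> D (1, (- \<sigma>, 0)) = 0)"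
  using assms(1) unfolding solves_transport_def
proof (rule AE_mp, intro AE_I2 impI)
  fix z :: "real \<times> real \<times> real"
  assume "z \<in> {0<..<T} \<times> UNIV \<longrightarrow> (\<exists>D. (u has_derivative D) (at z) \<and>
      D (1, 0, 0) + fst (a_ex (fst z) (snd z)) *\<^sub>R D (0, 1, 0) + snd (a_ex (fst z) (snd z)) *\<^sub>R D (0, 0, 1) = 0)"
    and z: "z \<in> {0<..<T} \<times> {x. 0 < \<sigma> * fst x}"
  then obtain D where D: "(u has_derivative D) (at z)" "D (1, 0, 0) - \<sigma> *\<^sub>R D (0, 1, 0) = 0"
    using sgn_abs_eq_if_unit_mult_pos[OF assms(2)] by (auto simp: a_ex_def)
  have lin: "linear D" using D(1) by (rule has_derivative_linear)
  have "D (1, (- \<sigma>, 0)) = D ((1, 0, 0) - \<sigma> *\<^sub>R (0, 1, 0))" by simp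
  also have "\<dots> = D (1, 0, 0) - \<sigma> *\<^sub>R D (0, 1, 0)"
    by (simp only: linear_diff[OF lin] linear_scale[OF lin])
  finally have "D (1, (- \<sigma>, 0)) = 0" using D(2) by simp
  with D(1) show "\<exists>D. (u has_derivative D) (at z) \<and> D (1, (- \<sigma>, 0)) = 0" by blast
qed

lemma a_ex_solution_const_on_open_characteristics:
  fixes u :: "real \<times> (real \<times> real) \<Rightarrow> 'b::euclidean_space"
  assumes lip: "locLip ({0..T} \<times> UNIV) u" and pde: "solves_transport T a_ex u"
    and \<sigma>: "\<bar>\<sigma>\<bar> = 1" and st: "0 < s" "s \<le> t" "t < T" "t < y"
  shows "u (s, (\<sigma> * (y - s), x2)) = u (t, (\<sigma> * (y - t), x2))"
proof -
  define U where "U = {0<..<T} \<times> {x::real \<times> real. 0 < \<sigma> * fst x}"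
  note \<sigma>\<sigma> = abs_eq_1_mult_self(2)[OF \<sigma>]
  have "u (s, (\<sigma> * y, x2) + s *\<^sub>R (- \<sigma>, 0)) = u (t, (\<sigma> * y, x2) + t *\<^sub>R (- \<sigma>, 0))"
  proof (rule locLip_const_along_characteristics[where U = U and W = "{w. t < \<sigma> * fst w}"])
    show "open U" unfolding U_def by (intro open_Times open_Collect_less continuous_intros)
    show "locLip U u" using lip by (rule locLip_subset) (auto simp: U_def)
    show "AE z in lborel. z \<in> U \<longrightarrow> (\<exists>D. (u has_derivative D) (at z) \<and> D (1, - \<sigma>, 0) = 0)"
      unfolding U_def by (rule solves_transport_a_ex_directional[OF pde \<sigma>])
    show "open {w::real \<times> real. t < \<sigma> * fst w}" by (intro open_Collect_less continuous_intros)
    show "(r, w + r *\<^sub>R (- \<sigma>, 0)) \<in> U" if "w \<in> {w. t < \<sigma> * fst w}" "r \<in> {s..t}" for w r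
      using that st by (auto simp: U_def algebra_simps \<sigma>\<sigma>)
    show "(\<sigma> * y, x2) \<in> {w. t < \<sigma> * fst w}"
      using st by (simp add: \<sigma>\<sigma>)
  qed (fact \<open>s \<le> t\<close>)
  then show ?thesis by (simp add: algebra_simps)
qed

lemma a_ex_solution_const_on_characteristics:
  fixes u :: "real \<times> (real \<times> real) \<Rightarrow> 'b::euclidean_space"
  assumes lip: "locLip ({0..T} \<times> UNIV) u" and pde: "solves_transport T a_ex u"
    and \<sigma>: "\<bar>\<sigma>\<bar> = 1" and ab: "0 \<le> a" "a \<le> b" "b \<le> T" "b \<le> y"
  shows "u (a, (\<sigma> * (y - a), x2)) = u (b, (\<sigma> * (y - b), x2))"
proof (cases "a = b")
  case False
  define h where "h t = u (t, (\<sigma> * (y - t), x2))" for t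
  define m where "m = min T y"
  have "0 < m" using ab False by (auto simp: m_def)
  have cont: "continuous_on {0..m} h"
    unfolding h_def
  proof (rule continuous_on_compose2[OF locLip_imp_continuous_on[OF closed_imp_locally_compact lip]])
    show "closed ({0..T} \<times> (UNIV :: (real \<times> real) set))" by (simp add: closed_Times)
    show "continuous_on {0..m} (\<lambda>t. (t, \<sigma> * (y - t), x2))" by (intro continuous_intros)
  qed (auto simp: m_def)
  have interior: "h s = h t" if "0 < s" "s \<le> t" "t < m" for s t
    using a_ex_solution_const_on_open_characteristics[OF lip pde \<sigma> that(1,2)] that(3)
    by (simp add: h_def m_def)
  have const: "h t = h (m/2)" if "t \<in> {0<..<m}" for t
  proof (cases "t \<le> m/2")
    case True
    then show ?thesis by (intro interior) (use that in auto)
  next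
    case False
    then show ?thesis by (intro interior[symmetric]) (use that in auto)
  qed
  have cl: "closure {0<..<m} = {0..m}" using \<open>0 < m\<close> by simp
  have "h t = h (m/2)" if "t \<in> {0..m}" for t
    by (rule continuous_constant_on_closure[of "{0<..<m}" h]) (simp_all only: cl cont const that)
  then show ?thesis using ab by (simp add: h_def m_def)
qed simp

lemma transport_flow_const_on_characteristics:
  assumes "transport_flow T a_ex X" "\<bar>\<sigma>\<bar> = 1" "0 \<le> a" "a \<le> b" "b \<le> T" "b \<le> y"
  shows "X (a, (\<sigma> * (y - a), x2)) = X (b, (\<sigma> * (y - b), x2))"
proof -
  obtain C where "C-lipschitz_on ({0..T} \<times> UNIV) X" and "solves_transport T a_ex X"
    using assms(1) unfolding transport_flow_def by blast
  then show ?thesis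
    by (rule a_ex_solution_const_on_characteristics[OF lipschitz_on_imp_locLip _ assms(2-6)])
qed

definition singular_set :: "real \<Rightarrow> (real \<times> (real \<times> real)) set" where
  "singular_set T = {z. fst (snd z) = 0} \<union> {z. fst (snd z) = T - fst z} \<union> {z. - fst (snd z) = T - fst z}"

definition inner_region :: "real \<Rightarrow> real \<Rightarrow> (real \<times> (real \<times> real)) set" where
  "inner_region T \<sigma> = {z. 0 < \<sigma> * fst (snd z) \<and> \<sigma> * fst (snd z) < T - fst z}"

definition outer_region :: "real \<Rightarrow> real \<Rightarrow> (real \<times> (real \<times> real)) set" where
  "outer_region T \<sigma> = {z. 0 < \<sigma> * fst (snd z) \<and> T - fst z < \<sigma> * fst (snd z)}"

lemma AE_lborel_not_in_singular_set: "AE z in lborel. z \<notin> singular_set T"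
proof (rule AE_lborel_if_negligible)
  have "singular_set T =
      {z. (0, (1, 0)) \<bullet> z = 0} \<union> {z. (1, (1, 0)) \<bullet> z = T} \<union> {z. (1, (-1, 0)) \<bullet> z = T}"
    by (auto simp: singular_set_def algebra_simps)
  then show "negligible (singular_set T)"
    by (simp add: negligible_hyperplane prod_eq_iff)
qed

lemma open_inner_region: "open (inner_region T \<sigma>)"
  unfolding inner_region_def by (intro open_Collect_conj open_Collect_less continuous_intros)

lemma open_outer_region: "open (outer_region T \<sigma>)"
  unfolding outer_region_def by (intro open_Collect_conj open_Collect_less continuous_intros)

lemma not_in_singular_setE:
  assumes "z \<notin> singular_set T"
  obtains (inner) \<sigma> where "\<bar>\<sigma>\<bar> = 1" "z \<in> inner_region T \<sigma>"
    | (outer) \<sigma> where "\<bar>\<sigma>\<bar> = 1" "z \<in> outer_region T \<sigma>"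
proof -
  let ?\<sigma> = "sgn (fst (snd z))"
  have "\<bar>?\<sigma>\<bar> = 1" "0 < ?\<sigma> * fst (snd z)" "?\<sigma> * fst (snd z) \<noteq> T - fst z"
    using assms by (auto simp: singular_set_def sgn_if)
  then show ?thesis
    using inner[of ?\<sigma>] outer[of ?\<sigma>] by (auto simp: inner_region_def outer_region_def neq_iff)
qed

section \<open>The set V^T_e\<close>

definition tent :: "real \<Rightarrow> real \<times> (real \<times> real) \<Rightarrow> real" where
  "tent T z = pos_part (T - fst z - \<bar>fst (snd z)\<bar>)"

lemma lipschitz_tent: "2-lipschitz_on UNIV (tent T)"
proof -
  have "(0 + 1 + 1)-lipschitz_on UNIV (\<lambda>z::real \<times> (real \<times> real). T - fst z - \<bar>fst (snd z)\<bar>)"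
    by (intro lipschitz_on_diff lipschitz_on_constant lipschitz_on_abs_compose lipschitz_on_coordinates)
  then show ?thesis unfolding tent_def[abs_def] by (intro lipschitz_on_pos_part_compose) simp
qed

lemma tent_in_adjoint_class: "tent T \<in> adjoint_class T a_ex"
  unfolding adjoint_class_def
proof (intro CollectI conjI allI)
  show "locLip ({0..T} \<times> UNIV) (tent T)"
    by (rule lipschitz_on_imp_locLip[OF lipschitz_on_subset[OF lipschitz_tent]]) simp
  show "tent T (T, x) = 0" for x by (simp add: tent_def pos_part_def)
  show "solves_transport T a_ex (tent T)" unfolding solves_transport_def
  proof (rule AE_mp[OF AE_lborel_not_in_singular_set], intro AE_I2 impI)
    fix z assume "z \<notin> singular_set T"
    then show "\<exists>D. (tent T has_derivative D) (at z) \<and>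
       D (1, 0, 0) + fst (a_ex (fst z) (snd z)) *\<^sub>R D (0, 1, 0) + snd (a_ex (fst z) (snd z)) *\<^sub>R D (0, 0, 1) = 0"
    proof (cases rule: not_in_singular_setE)
      case (inner \<sigma>)
      have "(tent T has_derivative (\<lambda>h. - fst h - \<sigma> * fst (snd h))) (at z)"
      proof (rule has_derivative_transform_within_open[OF _ open_inner_region inner(2)])
        show "((\<lambda>y. T - fst y - \<sigma> * fst (snd y)) has_derivative (\<lambda>h. - fst h - \<sigma> * fst (snd h))) (at z)"
          by (auto intro!: derivative_eq_intros)
        show "T - fst y - \<sigma> * fst (snd y) = tent T y" if "y \<in> inner_region T \<sigma>" for y
          using that sgn_abs_eq_if_unit_mult_pos[OF inner(1)] by (auto simp: inner_region_def tent_def pos_part_def)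
      qed
      then show ?thesis
        using sgn_abs_eq_if_unit_mult_pos[OF inner(1)] abs_eq_1_mult_self[OF inner(1)] inner(2)
        by (intro exI[of _ "\<lambda>h. - fst h - \<sigma> * fst (snd h)"]) (auto simp: a_ex_def inner_region_def)
    next
      case (outer \<sigma>)
      have "(tent T has_derivative (\<lambda>h. 0)) (at z)"
      proof (rule has_derivative_transform_within_open[OF _ open_outer_region outer(2)])
        show "((\<lambda>y. 0) has_derivative (\<lambda>h. 0)) (at z)" by simp
        show "0 = tent T y" if "y \<in> outer_region T \<sigma>" for y
          using that sgn_abs_eq_if_unit_mult_pos[OF outer(1)] by (auto simp: outer_region_def tent_def pos_part_def)
      qed
      then show ?thesis by (intro exI[of _ "\<lambda>h. 0"]) simp
    qed
  qed
qed

definition cone :: "real \<Rightarrow> (real \<times> (real \<times> real)) set" where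
  "cone T = {z. z \<in> {0<..<T} \<times> UNIV \<and> \<bar>fst (snd z)\<bar> < T - fst z}"

lemma adjoint_class_vanishes_outside_cone:
  assumes "p \<in> adjoint_class T a_ex" "z \<in> {0<..<T} \<times> UNIV" "T - fst z \<le> \<bar>fst (snd z)\<bar>"
  shows "p z = 0"
proof -
  obtain t x1 x2 where z: "z = (t, (x1, x2))" by (metis prod.collapse)
  then have "x1 \<noteq> 0" "\<bar>sgn x1\<bar> = 1" using assms(2,3) by (auto simp: sgn_if)
  have "p (t, (sgn x1 * (t + \<bar>x1\<bar> - t), x2)) = p (T, (sgn x1 * (t + \<bar>x1\<bar> - T), x2))"
    using assms(1) \<open>\<bar>sgn x1\<bar> = 1\<close> assms(2,3) z
    by (intro a_ex_solution_const_on_characteristics) (auto simp: adjoint_class_def)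
  then show ?thesis using assms(1) z by (simp add: adjoint_class_def mult_sgn_abs)
qed

lemma Ve_a_ex: "Ve T a_ex = cone T"
proof
  show "Ve T a_ex \<subseteq> cone T"
    unfolding Ve_def cone_def using adjoint_class_vanishes_outside_cone by force
  show "cone T \<subseteq> Ve T a_ex"
  proof
    fix z assume "z \<in> cone T"
    then have "tent T z \<noteq> 0" by (auto simp: cone_def tent_def pos_part_def)
    then show "z \<in> Ve T a_ex"
      unfolding Ve_def using tent_in_adjoint_class \<open>z \<in> cone T\<close> by (auto simp: cone_def)
  qed
qed

section \<open>The explicit flows\<close>

lemma XT_lam_eq:
  assumes "fst z \<le> T"
  shows "XT_lam T lam z = (pos_part (fst (snd z) - (T - fst z)) - pos_part (- fst (snd z) - (T - fst z)),
                           snd (snd z) + lam * tent T z)"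
proof -
  have "pos_part (\<bar>x\<bar> - s) * sgn x = pos_part (x - s) - pos_part (- x - s)" if "0 \<le> s" for x s :: real
    using that by (auto simp: pos_part_def sgn_if)
  from this[of "T - fst z" "fst (snd z)"] show ?thesis
    using assms by (simp add: XT_lam_def tent_def)
qed

lemma lipschitz_XT_lam: "\<exists>C. C-lipschitz_on ({0..T} \<times> UNIV) (XT_lam T lam)"
proof -
  let ?S = "{0..T} \<times> (UNIV :: (real \<times> real) set)"
  let ?r = "\<lambda>z. pos_part (fst (snd z) - (T - fst z)) - pos_part (- fst (snd z) - (T - fst z))"
  let ?s = "\<lambda>z. snd (snd z) + lam * tent T z"
  have "(1 + (0 + 1) + (1 + (0 + 1)))-lipschitz_on ?S ?r"
    by (intro lipschitz_on_diff lipschitz_on_pos_part_compose lipschitz_on_minus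
        lipschitz_on_constant lipschitz_on_coordinates)
  moreover have "(1 + \<bar>lam\<bar> * 2)-lipschitz_on ?S ?s"
    by (intro lipschitz_on_add lipschitz_on_cmult_real lipschitz_on_coordinates
        lipschitz_on_subset[OF lipschitz_tent]) simp
  ultimately have "(sqrt (4\<^sup>2 + (1 + \<bar>lam\<bar> * 2)\<^sup>2))-lipschitz_on ?S (\<lambda>z. (?r z, ?s z))"
    using lipschitz_on_Pair by fastforce
  moreover have "XT_lam T lam z = (?r z, ?s z)" if "z \<in> ?S" for z
    using that by (auto intro: XT_lam_eq)
  ultimately show ?thesis using lipschitz_on_transform by blast
qed

lemma XT_lam_derivative:
  assumes "z \<notin> singular_set T"
  obtains D where "(XT_lam T lam has_derivative D) (at z)"
    and "D (1, 0, 0) - sgn (fst (snd z)) *\<^sub>R D (0, 1, 0) = 0" and "spatial_jac D \<ge> 0"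
  using assms
proof (cases rule: not_in_singular_setE)
  case (inner \<sigma>)
  define D where "D h = (0::real, snd (snd h) - lam * (fst h + \<sigma> * fst (snd h)))" for h :: "real \<times> (real \<times> real)"
  have der: "(XT_lam T lam has_derivative D) (at z)"
  proof (rule has_derivative_transform_within_open[OF _ open_inner_region inner(2)])
    show "((\<lambda>y. (0::real, snd (snd y) + lam * (T - fst y - \<sigma> * fst (snd y)))) has_derivative D) (at z)"
      unfolding D_def by (auto intro!: derivative_eq_intros simp: algebra_simps)
    show "(0::real, snd (snd y) + lam * (T - fst y - \<sigma> * fst (snd y))) = XT_lam T lam y"
      if "y \<in> inner_region T \<sigma>" for y
      using that sgn_abs_eq_if_unit_mult_pos[OF inner(1)] by (auto simp: inner_region_def XT_lam_def pos_part_def)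
  qed
  have "sgn (fst (snd z)) = \<sigma>"
    using inner sgn_abs_eq_if_unit_mult_pos[OF inner(1)] by (simp add: inner_region_def)
  moreover have "D (0, 1, 0) = \<sigma> *\<^sub>R D (1, 0, 0)" by (simp add: D_def mult.commute)
  ultimately have "D (1, 0, 0) - sgn (fst (snd z)) *\<^sub>R D (0, 1, 0) = 0"
    using abs_eq_1_mult_self(1)[OF inner(1)] by simp
  moreover have "spatial_jac D = 0" by (simp add: D_def spatial_jac_def)
  ultimately show ?thesis using that[OF der] by simp
next
  case (outer \<sigma>)
  define D where "D h = (fst (snd h) + \<sigma> * fst h, snd (snd h))" for h :: "real \<times> (real \<times> real)"
  have "(XT_lam T lam has_derivative D) (at z)"
  proof (rule has_derivative_transform_within_open[OF _ open_outer_region outer(2)])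
    show "((\<lambda>y. (fst (snd y) - \<sigma> * (T - fst y), snd (snd y))) has_derivative D) (at z)"
      unfolding D_def by (auto intro!: derivative_eq_intros simp: algebra_simps)
    show "(fst (snd y) - \<sigma> * (T - fst y), snd (snd y)) = XT_lam T lam y"
      if "y \<in> outer_region T \<sigma>" for y
      using that sgn_abs_eq_if_unit_mult_pos[OF outer(1)] abs_eq_1_mult_self[OF outer(1)]
      by (auto simp: outer_region_def XT_lam_def pos_part_def algebra_simps)
  qed
  moreover have "D (1, 0, 0) - sgn (fst (snd z)) *\<^sub>R D (0, 1, 0) = 0"
    using outer sgn_abs_eq_if_unit_mult_pos[OF outer(1)] by (auto simp: D_def outer_region_def)
  moreover have "spatial_jac D = 1" by (simp add: D_def spatial_jac_def)
  ultimately show ?thesis using that by simp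
qed

lemma XT_lam_transport_flow: "transport_flow T a_ex (XT_lam T lam)"
  unfolding transport_flow_def
proof (intro conjI allI)
  show "\<exists>C. C-lipschitz_on ({0..T} \<times> UNIV) (XT_lam T lam)" by (rule lipschitz_XT_lam)
  show "XT_lam T lam (T, x) = x" for x
    by (cases x) (auto simp: XT_lam_def pos_part_def sgn_if)
  show "solves_transport T a_ex (XT_lam T lam)" unfolding solves_transport_def
    by (rule AE_mp[OF AE_lborel_not_in_singular_set], intro AE_I2 impI)
      (erule XT_lam_derivative, auto simp: a_ex_def)
  show "AE z in lborel. z \<in> {0<..<T} \<times> UNIV \<longrightarrow> (\<exists>D. (XT_lam T lam has_derivative D) (at z) \<and> 0 \<le> spatial_jac D)"
    by (rule AE_mp[OF AE_lborel_not_in_singular_set], intro AE_I2 impI) (erule XT_lam_derivative, auto)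
qed

lemma X_lam_semigroup:
  assumes "0 \<le> \<tau>" "\<tau> \<le> t" "t \<le> s"
  shows "X_lam lam s t (X_lam lam t \<tau> x) = X_lam lam s \<tau> x"
proof (cases x)
  case (Pair x1 x2)
  consider "0 < x1" "x1 \<le> t - \<tau>" | "t - \<tau> < x1" | "x1 = 0" | "x1 < 0" "- x1 \<le> t - \<tau>" | "- x1 > t - \<tau>"
    by linarith
  then show ?thesis
    using assms Pair by cases (auto simp: X_lam_def pos_part_def max_def algebra_simps)
qed

section \<open>Jacobians of transport flows\<close>

definition reflect_x1 :: "real \<times> (real \<times> real) \<Rightarrow> real \<times> (real \<times> real)" where
  "reflect_x1 z = (fst z, (- fst (snd z), snd (snd z)))"

lemma reflect_x1_involutive [simp]: "reflect_x1 (reflect_x1 z) = z"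
  by (simp add: reflect_x1_def)

lemma linear_reflect_x1: "linear reflect_x1"
  by (rule linearI) (auto simp: reflect_x1_def)

lemma spatial_jac_reflect_x1:
  assumes "linear D"
  shows "spatial_jac (\<lambda>h. D (reflect_x1 h)) = - spatial_jac D"
  using linear_neg[OF assms, of "(0, (1, 0))"] by (simp add: spatial_jac_def reflect_x1_def)

lemma transport_flow_even_in_cone:
  assumes "transport_flow T a_ex X" "0 \<le> fst z" "\<bar>fst (snd z)\<bar> < T - fst z"
  shows "X (reflect_x1 z) = X z"
proof -
  obtain t x1 x2 where z: "z = (t, (x1, x2))" by (metis prod.collapse)
  \<comment> \<open>Both points lie on characteristics through \<open>(t + \<bar>x1\<bar>, 0, x2)\<close>.\<close>
  have "X (t, (\<sigma> * \<bar>x1\<bar>, x2)) = X (t + \<bar>x1\<bar>, (0, x2))" if "\<bar>\<sigma>\<bar> = 1" for \<sigma>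
    using transport_flow_const_on_characteristics[OF assms(1) that, of t "t + \<bar>x1\<bar>" "t + \<bar>x1\<bar>" x2]
      assms(2,3) z by simp
  from this[of 1] this[of "-1"] show ?thesis
    using z by (cases "0 \<le> x1") (auto simp: reflect_x1_def)
qed

lemma transport_flow_outside_cone:
  assumes "transport_flow T a_ex X" "\<bar>\<sigma>\<bar> = 1" "0 \<le> fst z" "fst z \<le> T" "T - fst z \<le> \<sigma> * fst (snd z)"
  shows "X z = (fst (snd z) - \<sigma> * (T - fst z), snd (snd z))"
proof -
  obtain t x1 x2 where z: "z = (t, (x1, x2))" by (metis prod.collapse)
  note \<sigma>\<sigma> = abs_eq_1_mult_self(2)[OF assms(2)]
  have "X (t, (\<sigma> * (\<sigma> * x1 + t - t), x2)) = X (T, (\<sigma> * (\<sigma> * x1 + t - T), x2))"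
    using assms z by (intro transport_flow_const_on_characteristics) auto
  then show ?thesis
    using assms(1) z by (simp add: transport_flow_def \<sigma>\<sigma> algebra_simps)
qed

lemma transport_flow_spatial_jac_reflect_x1:
  assumes "transport_flow T a_ex X" "\<bar>\<sigma>\<bar> = 1" "z \<in> inner_region T \<sigma>" "0 < fst z"
    and D: "(X has_derivative D) (at z)" and D': "(X has_derivative D') (at (reflect_x1 z))"
  shows "spatial_jac D = - spatial_jac D'"
proof -
  have "(X has_derivative (\<lambda>h. D' (reflect_x1 h))) (at z)"
  proof (rule has_derivative_transform_within_open)
    show "((\<lambda>y. X (reflect_x1 y)) has_derivative (\<lambda>h. D' (reflect_x1 h))) (at z)"
      using has_derivative_compose[OF linear_imp_has_derivative[OF linear_reflect_x1] D'] by simp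
    show "open {y. 0 < fst y \<and> \<bar>fst (snd y)\<bar> < T - fst y}"
      by (intro open_Collect_conj open_Collect_less continuous_intros)
    show "z \<in> {y. 0 < fst y \<and> \<bar>fst (snd y)\<bar> < T - fst y}"
      using assms(3,4) sgn_abs_eq_if_unit_mult_pos[OF assms(2)] by (auto simp: inner_region_def)
    show "X (reflect_x1 y) = X y" if "y \<in> {y. 0 < fst y \<and> \<bar>fst (snd y)\<bar> < T - fst y}" for y
      using transport_flow_even_in_cone[OF assms(1)] that by auto
  qed
  with D have "D = (\<lambda>h. D' (reflect_x1 h))" by (rule has_derivative_unique)
  then show ?thesis using spatial_jac_reflect_x1[OF has_derivative_linear[OF D']] by simp
qed

lemma transport_flow_derivative_outer:
  assumes "transport_flow T a_ex X" "\<bar>\<sigma>\<bar> = 1" "z \<in> outer_region T \<sigma>" "z \<in> {0<..<T} \<times> UNIV"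
  shows "(X has_derivative (\<lambda>h. (fst (snd h) + \<sigma> * fst h, snd (snd h)))) (at z)"
proof (rule has_derivative_transform_within_open)
  show "((\<lambda>y. (fst (snd y) - \<sigma> * (T - fst y), snd (snd y))) has_derivative
      (\<lambda>h. (fst (snd h) + \<sigma> * fst h, snd (snd h)))) (at z)"
    by (auto intro!: derivative_eq_intros simp: algebra_simps)
  show "open (outer_region T \<sigma> \<inter> {0<..<T} \<times> UNIV)"
    by (intro open_Int open_outer_region open_Times) simp_all
  show "z \<in> outer_region T \<sigma> \<inter> {0<..<T} \<times> UNIV" using assms(3,4) by simp
  show "(fst (snd y) - \<sigma> * (T - fst y), snd (snd y)) = X y"
    if "y \<in> outer_region T \<sigma> \<inter> {0<..<T} \<times> UNIV" for y
    using transport_flow_outside_cone[OF assms(1,2)] that by (auto simp: outer_region_def)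
qed

lemma transport_flow_jacobian:
  assumes "transport_flow T a_ex X"
  shows "AE z in lborel. z \<in> {0<..<T} \<times> UNIV \<longrightarrow>
           (\<exists>D. (X has_derivative D) (at z) \<and>
                spatial_jac D = (if \<bar>fst (snd z)\<bar> \<ge> T - fst z then 1 else 0))"
proof -
  have AEX: "AE z in lborel. z \<in> {0<..<T} \<times> UNIV \<longrightarrow> (\<exists>D. (X has_derivative D) (at z) \<and> spatial_jac D \<ge> 0)"
    using assms by (simp add: transport_flow_def)
  then obtain N where "negligible N"
    and N: "\<And>z. z \<notin> N \<Longrightarrow> z \<in> {0<..<T} \<times> UNIV \<longrightarrow> (\<exists>D. (X has_derivative D) (at z) \<and> spatial_jac D \<ge> 0)"
    by (rule AE_lborel_negligibleE) blast
  have "negligible (reflect_x1 ` N)"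
    using linear_reflect_x1 _ \<open>negligible N\<close> by (rule negligible_linear_image) simp
  then have "AE z in lborel. z \<notin> reflect_x1 ` N" by (rule AE_lborel_if_negligible)
  with AEX AE_lborel_not_in_singular_set[of T] show ?thesis
  proof eventually_elim
    case (elim z)
    show ?case
    proof
      assume z: "z \<in> {0<..<T} \<times> UNIV"
      then obtain D where D: "(X has_derivative D) (at z)" "spatial_jac D \<ge> 0" using elim by blast
      from \<open>z \<notin> singular_set T\<close> show "\<exists>D. (X has_derivative D) (at z) \<and>
          spatial_jac D = (if \<bar>fst (snd z)\<bar> \<ge> T - fst z then 1 else 0)"
      proof (cases rule: not_in_singular_setE)
        case (inner \<sigma>)
        have "reflect_x1 z \<notin> N" using elim by (metis image_eqI reflect_x1_involutive)
        moreover have "reflect_x1 z \<in> {0<..<T} \<times> UNIV" using z by (cases z) (simp add: reflect_x1_def)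
        ultimately obtain D' where D': "(X has_derivative D') (at (reflect_x1 z))" "spatial_jac D' \<ge> 0"
          using N by metis
        have "spatial_jac D = - spatial_jac D'"
          using transport_flow_spatial_jac_reflect_x1[OF assms inner(1,2) _ D(1) D'(1)] z
          by (auto simp: mem_Times_iff)
        then have "spatial_jac D = 0" using D(2) D'(2) by simp
        then show ?thesis
          using D(1) inner sgn_abs_eq_if_unit_mult_pos[OF inner(1)] by (auto simp: inner_region_def)
      next
        case (outer \<sigma>)
        then show ?thesis
          using transport_flow_derivative_outer[OF assms outer(1,2) z] sgn_abs_eq_if_unit_mult_pos[OF outer(1)]
          by (intro exI) (auto simp: spatial_jac_def outer_region_def)
      qed
    qed
  qed
qed

theorem mainTheorem17:
  fixes T :: real
  assumes "T > 0"
  shows "Ve T a_ex = {z. z \<in> {0<..<T} \<times> UNIV \<and> \<bar>fst (snd z)\<bar> < T - fst z}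
    \<and> (\<forall>lam. transport_flow T a_ex (XT_lam T lam))
    \<and> (\<exists>X Y. transport_flow T a_ex X \<and> transport_flow T a_ex Y \<and> (\<exists>z \<in> {0..T} \<times> UNIV. X z \<noteq> Y z))
    \<and> (\<forall>X. transport_flow T a_ex X \<longrightarrow>
          (AE z in lborel. z \<in> {0<..<T} \<times> UNIV \<longrightarrow>
             (\<exists>D. (X has_derivative D) (at z) \<and>
                  spatial_jac D = (if \<bar>fst (snd z)\<bar> \<ge> T - fst z then 1 else 0))))
    \<and> (\<forall>lam \<tau> t s x. 0 \<le> \<tau> \<and> \<tau> \<le> t \<and> t \<le> s \<and> s \<le> T \<longrightarrow>
          X_lam lam s t (X_lam lam t \<tau> x) = X_lam lam s \<tau> x)"
proof (intro conjI allI impI)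
  show "Ve T a_ex = {z. z \<in> {0<..<T} \<times> UNIV \<and> \<bar>fst (snd z)\<bar> < T - fst z}"
    using Ve_a_ex by (simp add: cone_def)
  show "transport_flow T a_ex (XT_lam T lam)" for lam by (rule XT_lam_transport_flow)
  have "XT_lam T 0 (0, (0, 0)) \<noteq> XT_lam T 1 (0, (0, 0))"
    using assms by (simp add: XT_lam_def pos_part_def)
  then show "\<exists>X Y. transport_flow T a_ex X \<and> transport_flow T a_ex Y \<and> (\<exists>z \<in> {0..T} \<times> UNIV. X z \<noteq> Y z)"
    using XT_lam_transport_flow assms by fastforce
  show "AE z in lborel. z \<in> {0<..<T} \<times> UNIV \<longrightarrow>
      (\<exists>D. (X has_derivative D) (at z) \<and> spatial_jac D = (if \<bar>fst (snd z)\<bar> \<ge> T - fst z then 1 else 0))"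
    if "transport_flow T a_ex X" for X
    using that by (rule transport_flow_jacobian)
  show "X_lam lam s t (X_lam lam t \<tau> x) = X_lam lam s \<tau> x"
    if "0 \<le> \<tau> \<and> \<tau> \<le> t \<and> t \<le> s \<and> s \<le> T" for lam \<tau> t s x
    using that by (intro X_lam_semigroup) auto
qed

end
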